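(* Let $\ell>0$ and let $\gamma\in C^2([0,\ell];\mathbb R^2)$ be a closed curve parametrized by arclength, of length $\ell$, with $\partial_s\gamma(0)=\partial_s\gamma(\ell)$, $\partial_s^2\gamma(0)=\partial_s^2\gamma(\ell)$, and let $\theta$ be a continuous lifting with $\partial_s\gamma=(\cos\theta,\sin\theta)$. For $\epsilon\in(0,1]$ let $\gamma_\epsilon\in H^2([0,\ell];\mathbb R^2)$ be closed curves parametrized by arclength of length $\ell$ with $\gamma_\epsilon(0)=\gamma_\epsilon(\ell)$, $\partial_s\gamma_\epsilon(0)=\partial_s\gamma_\epsilon(\ell)$, and assume there is $C>0$ with $\epsilon^{1/2}\int_0^\ell\kappa_{\gamma_\epsilon}^2\,ds\le C$ and $\int_0^\ell|\partial_s\gamma_\epsilon-\partial_s\gamma|^2\,ds\le C\epsilon^{1/2}$. Let $\theta_\epsilon\in H^1$ with $\partial_s\gamma_\epsilon=(\cos\theta_\epsilon,\sin\theta_\epsilon)$, $\phi_\epsilon=\theta_\epsilon-\theta$, and $\Phi(r)=\int_0^r2\sqrt{1-\cos t}\,dt$. Then $$\lim_{\epsilon\to0^+}\Big\|\frac{2\pi}{8\sqrt2}\partial_s(\Phi\circ\phi_\epsilon)-\partial_s\phi_\epsilon\Big\|_{\mathrm{flat},[0,\ell]}=0.$$ In particular, if $\epsilon_k\to0^+$ and $\omega\in M_{\mathrm{fin},\mathbb Z}([0,\ell])$ satisfy $\|(\kappa_{\gamma_{\epsilon_k}}-\kappa_\gamma)-\omega\|_{\mathrm{flat},[0,\ell]}\to0$,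 then $\frac{2\pi}{8\sqrt2}\partial_s(\Phi\circ\phi_{\epsilon_k})\to\omega$ in the flat norm.
   Context: $\kappa_{\gamma_\epsilon}=\partial_s\theta_\epsilon$, $\kappa_\gamma=\partial_s\theta$ are the signed curvatures. $M_{\mathrm{fin},\mathbb Z}([0,\ell])$ is the set of measures $2\pi\sum_{j=1}^Nc_j\delta_{s_j}$ with $c_j\in\mathbb Z$, $0\le s_1<\dots<s_N\le\ell$. The flat norm is $\|\nu\|_{\mathrm{flat},[0,\ell]}=\sup\{\int\psi\,d\nu:\psi\in C^{0,1}([0,\ell]),\ \|\psi\|_{L^\infty}+\mathrm{Lip}(\psi)\le1,\ \psi(0)=\psi(\ell)\}$. *)

theory Defs
  imports "HOL-Analysis.Analysis"
begin

text \<open>Weak (distributional) derivative on [0,l]: g is an L1 function with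
  f s = f 0 + int_0^s g for all s in [0,l] (so f is absolutely continuous).\<close>
definition has_weak_deriv :: "real \<Rightarrow> (real \<Rightarrow> real) \<Rightarrow> (real \<Rightarrow> real) \<Rightarrow> bool" where
  "has_weak_deriv l f g \<longleftrightarrow>
     g absolutely_integrable_on {0..l} \<and> (\<forall>s\<in>{0..l}. f s = f 0 + integral {0..s} g)"

text \<open>Sobolev space H^1([0,l]) (continuous representative).\<close>
definition H1 :: "real \<Rightarrow> (real \<Rightarrow> real) \<Rightarrow> bool" where
  "H1 l f \<longleftrightarrow> (\<exists>g. has_weak_deriv l f g \<and> (\<lambda>s. (g s)^2) integrable_on {0..l})"

text \<open>The weak derivative \<partial>_s f (determined up to a null set).\<close>
definition wderiv :: "real \<Rightarrow> (real \<Rightarrow> real) \<Rightarrow> real \<Rightarrow> real" where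
  "wderiv l f = (SOME g. has_weak_deriv l f g)"

definition flat_test :: "real \<Rightarrow> (real \<Rightarrow> real) \<Rightarrow> bool" where
  "flat_test l \<psi> \<longleftrightarrow> (\<exists>L\<ge>0. L-lipschitz_on {0..l} \<psi> \<and> (\<forall>s\<in>{0..l}. \<bar>\<psi> s\<bar> + L \<le> 1))
      \<and> \<psi> 0 = \<psi> l"

text \<open>Flat norm of a measure nu on [0,l], given through its pairing
  nu_pair psi = int psi d nu.\<close>
definition flat_norm :: "real \<Rightarrow> ((real \<Rightarrow> real) \<Rightarrow> real) \<Rightarrow> real" where
  "flat_norm l \<nu> = Sup {\<nu> \<psi> | \<psi>. flat_test l \<psi>}"

text \<open>Pairing of the absolutely continuous measure g ds with psi.\<close>
definition pair_density :: "real \<Rightarrow> (real \<Rightarrow> real) \<Rightarrow> (real \<Rightarrow> real) \<Rightarrow> real" where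
  "pair_density l g \<psi> = integral {0..l} (\<lambda>s. \<psi> s * g s)"

text \<open>Pairing of omega = 2 pi sum_{j<N} c_j delta_{s_j} with psi.\<close>
definition pair_atoms :: "nat \<Rightarrow> (nat \<Rightarrow> int) \<Rightarrow> (nat \<Rightarrow> real) \<Rightarrow> (real \<Rightarrow> real) \<Rightarrow> real" where
  "pair_atoms N c p \<psi> = 2 * pi * (\<Sum>j<N. of_int (c j) * \<psi> (p j))"

definition Mfin_Z :: "real \<Rightarrow> nat \<Rightarrow> (nat \<Rightarrow> int) \<Rightarrow> (nat \<Rightarrow> real) \<Rightarrow> bool" where
  "Mfin_Z l N c p \<longleftrightarrow> (\<forall>j<N. 0 \<le> p j \<and> p j \<le> l) \<and> (\<forall>i j. i < j \<and> j < N \<longrightarrow> p i < p j)"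

definition Phi :: "real \<Rightarrow> real" where
  "Phi r = (if 0 \<le> r then integral {0..r} (\<lambda>t. 2 * sqrt (1 - cos t))
            else - integral {r..0} (\<lambda>t. 2 * sqrt (1 - cos t)))"

end

theory Submission
  imports Defs
begin

(* With phi = theta_eps - theta and c = 2 pi / (8 sqrt 2), the function Phi_defect = c Phi - id
   is 2 pi-periodic, and the measure whose flat norm is estimated is the weak derivative of
   Phi_defect o phi. Both tangents are closed, so phi(l) - phi(0) lies in 2 pi Z and
   Phi_defect o phi takes equal values at 0 and l; integrating by parts against a test function
   psi with Lip(psi) <= 1 and psi(0) = psi(l) bounds the pairing by the L^1 norm of
   Phi_defect o phi. Periodicity and |Phi_defect x| <= 3 |x| give
   |Phi_defect x| <= 9 |exp(i x) - 1|, and |exp(i phi) - 1| = |tangent_eps - tangent|, so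
   by AM-GM with weight eps^(1/4) the L^1 norm is at most 9 (C + l)/2 eps^(1/4).
   The second claim follows because the weak derivative of phi is kappa_eps - kappa and differs
   from c times the weak derivative of Phi o phi exactly by this defect. *)

section \<open>Riemann sums over partitions\<close>

lemma le_of_forall_pos_le_add_mult:
  fixes x y K :: real
  assumes "K \<ge> 0" and "\<And>\<eta>. \<eta> > 0 \<Longrightarrow> x \<le> y + \<eta> * K"
  shows "x \<le> y"
proof (rule field_le_epsilon)
  fix e :: real assume "e > 0"
  then have "x \<le> y + e / (K + 1) * K" using assms by (intro assms(2)) simp
  also have "\<dots> \<le> y + e" using \<open>e > 0\<close> \<open>K \<ge> 0\<close> by (simp add: field_simps)
  finally show "x \<le> y + e" .
qed

lemma summation_by_parts_closed:
  fixes a b :: "nat \<Rightarrow> 'a::comm_ring"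
  assumes "a n * b n = a 0 * b 0"
  shows "(\<Sum>i<n. a i * (b (Suc i) - b i)) = (\<Sum>i<n. (a i - a (Suc i)) * b (Suc i))"
proof -
  have "(\<Sum>i<n. a i * (b (Suc i) - b i)) - (\<Sum>i<n. (a i - a (Suc i)) * b (Suc i))
      = (\<Sum>i<n. a (Suc i) * b (Suc i) - a i * b i)"
    by (simp add: sum_subtractf[symmetric] algebra_simps)
  also have "\<dots> = 0" using sum_lessThan_telescope[of "\<lambda>i. a i * b i" n] assms by simp
  finally show ?thesis by simp
qed

lemma integral_sum_partition:
  fixes f :: "real \<Rightarrow> 'a::banach" and t :: "nat \<Rightarrow> real"
  assumes "mono t" and "f integrable_on {t 0..t n}"
  shows "integral {t 0..t n} f = (\<Sum>i<n. integral {t i..t (Suc i)} f)"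
  using assms(2)
proof (induction n)
  case (Suc n)
  have le: "t 0 \<le> t n" "t n \<le> t (Suc n)" using \<open>mono t\<close> by (auto simp: monoD)
  have "f integrable_on {t 0..t n}"
    using Suc.prems integrable_on_subinterval le by fastforce
  with Suc.IH Henstock_Kurzweil_Integration.integral_combine[OF le Suc.prems] show ?case by simp
qed simp

lemma fine_partition_exists:
  fixes a b d :: real
  assumes "a \<le> b" and "d > 0"
  obtains t n where "mono t" "t 0 = a" "t n = b" "\<And>i. t (Suc i) - t i \<le> d"
    "\<And>i. i < n \<Longrightarrow> {t i..t (Suc i)} \<subseteq> {a..b}"
proof -
  obtain n :: nat where n: "(b - a) / d < real n" using reals_Archimedean2 by blast
  have "0 \<le> (b - a) / d" using assms by simp
  with n have "n > 0" by linarith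
  define t where "t i = a + real i * ((b - a) / real n)" for i
  have mono: "mono t" unfolding t_def mono_def
    using assms by (auto intro!: divide_right_mono mult_right_mono)
  have step: "t (Suc i) - t i \<le> d" for i
  proof -
    have "t (Suc i) - t i = (b - a) / real n" by (simp add: t_def distrib_right flip: diff_divide_distrib)
    also have "\<dots> \<le> d" using n \<open>n > 0\<close> assms by (simp add: divide_le_eq divide_less_eq mult.commute)
    finally show ?thesis .
  qed
  have tn: "t n = b" using \<open>n > 0\<close> by (simp add: t_def)
  have "{t i..t (Suc i)} \<subseteq> {a..b}" if "i < n" for i
  proof -
    have "t 0 \<le> t i" "t (Suc i) \<le> t n" using mono that by (auto simp: monoD)
    then show ?thesis using tn by (auto simp: t_def)
  qed
  with mono step tn show ?thesis using that[of t n] by (simp add: t_def)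
qed

lemma continuous_on_mult_absolutely_integrable:
  fixes \<psi> h :: "real \<Rightarrow> real"
  assumes "continuous_on {a..b} \<psi>" and "h absolutely_integrable_on {a..b}"
  shows "(\<lambda>x. \<psi> x * h x) absolutely_integrable_on {a..b}"
proof (rule absolutely_integrable_bounded_measurable_product_real[OF _ _ _ assms(2)])
  show "\<psi> \<in> borel_measurable (lebesgue_on {a..b})"
    using assms(1) by (rule continuous_imp_measurable_on_sets_lebesgue) simp
  show "bounded (\<psi> ` {a..b})"
    using assms(1) by (intro compact_imp_bounded compact_continuous_image) auto
qed simp

lemma Riemann_sum_error_bound:
  fixes h \<psi> :: "real \<Rightarrow> real" and t :: "nat \<Rightarrow> real"
  assumes "mono t"
    and h: "h absolutely_integrable_on {t 0..t n}" and \<psi>: "continuous_on {t 0..t n} \<psi>"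
    and osc: "\<And>i x. i < n \<Longrightarrow> x \<in> {t i..t (Suc i)} \<Longrightarrow> \<bar>\<psi> x - \<psi> (t i)\<bar> \<le> \<delta>"
  shows "\<bar>integral {t 0..t n} (\<lambda>x. \<psi> x * h x) - (\<Sum>i<n. \<psi> (t i) * integral {t i..t (Suc i)} h)\<bar>
          \<le> \<delta> * integral {t 0..t n} (\<lambda>x. \<bar>h x\<bar>)"
proof -
  have \<psi>h: "(\<lambda>x. \<psi> x * h x) absolutely_integrable_on {t 0..t n}"
    using \<psi> h by (rule continuous_on_mult_absolutely_integrable)
  have piece: "\<bar>integral {t i..t (Suc i)} (\<lambda>x. \<psi> x * h x) - \<psi> (t i) * integral {t i..t (Suc i)} h\<bar>
      \<le> \<delta> * integral {t i..t (Suc i)} (\<lambda>x. \<bar>h x\<bar>)" if "i < n" for i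
  proof -
    let ?I = "{t i..t (Suc i)}"
    have "?I \<subseteq> {t 0..t n}" using \<open>mono t\<close> that by (auto simp: monoD intro: order_trans)
    then have hI: "h integrable_on ?I" "(\<lambda>x. \<bar>h x\<bar>) integrable_on ?I"
      and \<psi>hI: "(\<lambda>x. \<psi> x * h x) integrable_on ?I"
      using absolutely_integrable_on_subinterval[OF h] absolutely_integrable_on_subinterval[OF \<psi>h]
      by (auto simp: absolutely_integrable_on_def)
    have "integral ?I (\<lambda>x. \<psi> x * h x) - \<psi> (t i) * integral ?I h
        = integral ?I (\<lambda>x. (\<psi> x - \<psi> (t i)) * h x)"
      using hI \<psi>hI integrable_on_mult_right[OF hI(1)] by (simp add: left_diff_distrib integral_diff)
    also have "\<bar>\<dots>\<bar> \<le> integral ?I (\<lambda>x. \<delta> * \<bar>h x\<bar>)"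
    proof -
      have "(\<lambda>x. (\<psi> x - \<psi> (t i)) * h x) integrable_on ?I"
        using integrable_diff[OF \<psi>hI integrable_on_mult_right[OF hI(1)]] by (simp add: left_diff_distrib)
      moreover have "norm ((\<psi> x - \<psi> (t i)) * h x) \<le> \<delta> * \<bar>h x\<bar>" if "x \<in> ?I" for x
        using osc[OF \<open>i < n\<close> that] by (simp add: abs_mult mult_right_mono)
      ultimately have "norm (integral ?I (\<lambda>x. (\<psi> x - \<psi> (t i)) * h x)) \<le> integral ?I (\<lambda>x. \<delta> * \<bar>h x\<bar>)"
        by (intro integral_norm_bound_integral integrable_on_mult_right hI(2))
      then show ?thesis by simp
    qed
    finally show ?thesis by (simp only: integral_mult_right)
  qed
  have "integral {t 0..t n} (\<lambda>x. \<psi> x * h x) - (\<Sum>i<n. \<psi> (t i) * integral {t i..t (Suc i)} h)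
      = (\<Sum>i<n. integral {t i..t (Suc i)} (\<lambda>x. \<psi> x * h x) - \<psi> (t i) * integral {t i..t (Suc i)} h)"
    using \<psi>h unfolding absolutely_integrable_on_def
    by (simp add: integral_sum_partition[OF \<open>mono t\<close>, of _ n] sum_subtractf)
  also have "\<bar>\<dots>\<bar> \<le> (\<Sum>i<n. \<delta> * integral {t i..t (Suc i)} (\<lambda>x. \<bar>h x\<bar>))"
    by (rule order_trans[OF sum_abs sum_mono]) (simp add: piece)
  also have "\<dots> = \<delta> * integral {t 0..t n} (\<lambda>x. \<bar>h x\<bar>)"
    using h unfolding absolutely_integrable_on_def
    by (simp add: integral_sum_partition[OF \<open>mono t\<close>, of _ n] sum_distrib_left)
  finally show ?thesis .
qed

section \<open>Absolutely continuous functions\<close>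

lemma has_weak_derivI:
  assumes "g absolutely_integrable_on {0..l}" and "\<And>s. s \<in> {0..l} \<Longrightarrow> f s = f 0 + integral {0..s} g"
  shows "has_weak_deriv l f g"
  using assms unfolding has_weak_deriv_def by blast

lemma has_weak_derivD:
  assumes "has_weak_deriv l f g"
  shows "g absolutely_integrable_on {0..l}" and "\<And>s. s \<in> {0..l} \<Longrightarrow> f s = f 0 + integral {0..s} g"
  using assms unfolding has_weak_deriv_def by blast+

lemma has_weak_deriv_integrable_on:
  assumes "has_weak_deriv l f g" and "{a..b} \<subseteq> {0..l}"
  shows "g integrable_on {a..b}" and "(\<lambda>s. \<bar>g s\<bar>) integrable_on {a..b}"
  using absolutely_integrable_on_subinterval[OF has_weak_derivD(1)[OF assms(1)] assms(2)]
  by (simp_all add: absolutely_integrable_on_def)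

lemma has_weak_deriv_wderiv:
  assumes "has_weak_deriv l f g"
  shows "has_weak_deriv l f (wderiv l f)"
  unfolding wderiv_def by (rule someI[of "has_weak_deriv l f", OF assms])

lemma has_weak_deriv_integral_diff:
  assumes f: "has_weak_deriv l f g" and "x \<in> {0..l}" "y \<in> {0..l}" "x \<le> y"
  shows "f y - f x = integral {x..y} g"
proof -
  have "g integrable_on {0..y}" using assms by (intro has_weak_deriv_integrable_on) auto
  then have "integral {0..x} g + integral {x..y} g = integral {0..y} g"
    using assms(2-4) by (intro Henstock_Kurzweil_Integration.integral_combine) auto
  with has_weak_derivD(2)[OF f assms(2)] has_weak_derivD(2)[OF f assms(3)] show ?thesis by simp
qed

lemma has_weak_deriv_abs_diff_le:
  assumes "has_weak_deriv l f g" and "x \<in> {0..l}" "y \<in> {0..l}" "x \<le> y"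
  shows "\<bar>f y - f x\<bar> \<le> integral {x..y} (\<lambda>s. \<bar>g s\<bar>)"
proof -
  have "{x..y} \<subseteq> {0..l}" using assms by auto
  then show ?thesis
    using has_weak_deriv_integral_diff[OF assms] integral_norm_bound_integral[of g "{x..y}"]
      has_weak_deriv_integrable_on[OF assms(1)] by simp
qed

lemma has_weak_deriv_continuous_on:
  assumes "has_weak_deriv l f g"
  shows "continuous_on {0..l} f"
proof -
  have "continuous_on {0..l} (\<lambda>s. f 0 + integral {0..s} g)"
    using has_weak_deriv_integrable_on[OF assms order_refl]
    by (intro continuous_intros indefinite_integral_continuous_1)
  then show ?thesis
    by (rule continuous_on_eq) (rule sym, rule has_weak_derivD(2)[OF assms])
qed

lemma has_weak_deriv_diff:
  assumes f: "has_weak_deriv l f f'" and g: "has_weak_deriv l g g'"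
  shows "has_weak_deriv l (\<lambda>s. f s - g s) (\<lambda>s. f' s - g' s)"
proof (rule has_weak_derivI)
  show "(\<lambda>s. f' s - g' s) absolutely_integrable_on {0..l}"
    using has_weak_derivD(1)[OF f] has_weak_derivD(1)[OF g] by (rule set_integral_diff)
  fix s assume s: "s \<in> {0..l}"
  then have "f' integrable_on {0..s}" "g' integrable_on {0..s}"
    using has_weak_deriv_integrable_on f g by auto
  then show "f s - g s = f 0 - g 0 + integral {0..s} (\<lambda>s. f' s - g' s)"
    using has_weak_derivD(2)[OF f s] has_weak_derivD(2)[OF g s] by (simp add: integral_diff)
qed

lemma has_weak_deriv_cmult:
  assumes f: "has_weak_deriv l f f'"
  shows "has_weak_deriv l (\<lambda>s. c * f s) (\<lambda>s. c * f' s)"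
proof (rule has_weak_derivI)
  show "(\<lambda>s. c * f' s) absolutely_integrable_on {0..l}"
    using has_weak_derivD(1)[OF f] by (cases "c = 0") auto
  show "c * f s = c * f 0 + integral {0..s} (\<lambda>s. c * f' s)" if "s \<in> {0..l}" for s
    using has_weak_derivD(2)[OF f that] by (simp add: distrib_left)
qed

lemma lifting_has_real_derivative:
  fixes g g' :: "real \<Rightarrow> complex" and \<theta> :: "real \<Rightarrow> real"
  assumes \<theta>: "continuous_on S \<theta>" and lift: "\<And>s. s \<in> S \<Longrightarrow> g s = cis (\<theta> s)"
    and g: "(g has_vector_derivative g' s) (at s within S)" and s: "s \<in> S"
  shows "(\<theta> has_real_derivative Im (g' s * cnj (g s))) (at s within S)"
proof -
  define w where "w = cnj (g s)"
  have gw: "g t * w = cis (\<theta> t - \<theta> s)" if "t \<in> S" for t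
    using lift[OF s] lift[OF that] by (simp add: w_def cis_cnj cis_mult)
  have "((\<lambda>t. g t * w) has_vector_derivative g' s * w) (at s within S)"
    using bounded_linear.has_vector_derivative[OF bounded_linear_mult_left g] .
  moreover have "(Ln has_field_derivative 1) (at ((\<lambda>t. g t * w) s) within (\<lambda>t. g t * w) ` S)"
    using has_field_derivative_Ln[of 1] gw[OF s] by (simp add: has_field_derivative_at_within)
  ultimately have "((Ln \<circ> (\<lambda>t. g t * w)) has_vector_derivative g' s * w * 1) (at s within S)"
    by (rule field_vector_diff_chain_within)
  from has_vector_derivative_add[OF has_vector_derivative_const
      bounded_linear.has_vector_derivative[OF bounded_linear_Im this]]
  have Ln_deriv: "((\<lambda>t. \<theta> s + Im (Ln (g t * w))) has_vector_derivative Im (g' s * w)) (at s within S)"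
    by simp
  (* Near s, theta moves by less than pi, so there it equals theta s + Im (Ln (g t * w)). *)
  obtain d where "d > 0" and d: "\<And>t. t \<in> S \<Longrightarrow> dist t s < d \<Longrightarrow> dist (\<theta> t) (\<theta> s) < pi"
    using \<theta> s pi_gt_zero unfolding continuous_on_iff by metis
  have "\<theta> s + Im (Ln (g t * w)) = \<theta> t" if "t \<in> S" "dist t s < d" for t
  proof -
    have "\<bar>\<theta> t - \<theta> s\<bar> < pi" using d[OF that] by (simp add: dist_real_def)
    moreover have "g t * w = exp (\<i> * complex_of_real (\<theta> t - \<theta> s))"
      unfolding gw[OF that(1)] by (rule cis_conv_exp)
    ultimately show ?thesis by (simp add: Ln_exp)
  qed
  then have "(\<theta> has_vector_derivative Im (g' s * w)) (at s within S)"
    by (rule has_vector_derivative_transform_within[OF Ln_deriv \<open>d > 0\<close> s]) auto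
  then show ?thesis by (simp add: w_def has_real_derivative_iff_has_vector_derivative)
qed

lemma has_weak_deriv_of_real_derivative:
  assumes "\<And>s. s \<in> {0..l} \<Longrightarrow> (f has_real_derivative f' s) (at s within {0..l})"
    and "continuous_on {0..l} f'"
  shows "has_weak_deriv l f f'"
proof (rule has_weak_derivI)
  show "f' absolutely_integrable_on {0..l}"
    using assms(2) by (rule absolutely_integrable_continuous_real)
  fix s assume s: "s \<in> {0..l}"
  have "(f' has_integral (f s - f 0)) {0..s}"
  proof (rule fundamental_theorem_of_calculus)
    fix x assume "x \<in> {0..s}"
    with s assms(1)[of x] show "(f has_vector_derivative f' x) (at x within {0..s})"
      by (auto simp: has_real_derivative_iff_has_vector_derivative intro: has_vector_derivative_within_subset)
  qed (use s in simp)
  then show "f s = f 0 + integral {0..s} f'" by (simp add: integral_unique)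
qed

section \<open>Integration by parts and the chain rule\<close>

lemma has_weak_deriv_endpoint_bound:
  assumes g: "has_weak_deriv l g h" and ab: "a \<in> {0..l}" "b \<in> {0..l}" "a \<le> b"
  shows "(b - a) * \<bar>g b\<bar> \<le> integral {a..b} (\<lambda>x. \<bar>g x\<bar>) + (b - a) * integral {a..b} (\<lambda>x. \<bar>h x\<bar>)"
proof -
  let ?A = "integral {a..b} (\<lambda>x. \<bar>h x\<bar>)"
  have sub: "{a..b} \<subseteq> {0..l}" using ab by auto
  have habs: "(\<lambda>x. \<bar>h x\<bar>) integrable_on {x..b}" if "x \<in> {a..b}" for x
    using that ab by (intro has_weak_deriv_integrable_on[OF g]) auto
  have gabs: "(\<lambda>x. \<bar>g x\<bar>) integrable_on {a..b}"
    using has_weak_deriv_continuous_on[OF g] sub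
    by (intro integrable_continuous_interval continuous_intros) (auto intro: continuous_on_subset)
  have "\<bar>g b\<bar> \<le> \<bar>g x\<bar> + ?A" if x: "x \<in> {a..b}" for x
  proof -
    have "\<bar>g b - g x\<bar> \<le> integral {x..b} (\<lambda>x. \<bar>h x\<bar>)"
      using x sub by (intro has_weak_deriv_abs_diff_le[OF g]) auto
    also have "\<dots> \<le> ?A"
      using x habs[of x] habs[of a] ab by (intro integral_subset_le) auto
    finally show ?thesis by linarith
  qed
  then have "integral {a..b} (\<lambda>x. \<bar>g b\<bar>) \<le> integral {a..b} (\<lambda>x. \<bar>g x\<bar> + ?A)"
    using gabs by (intro integral_le integrable_add integrable_const_ivl) auto
  then show ?thesis
    using ab gabs by (simp add: integral_add[OF gabs integrable_const_ivl] mult.commute)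
qed

(* Summation by parts over fine partitions: this avoids differentiating the test function,
   which is merely Lipschitz. *)
lemma periodic_integration_by_parts_bound:
  fixes g h \<psi> :: "real \<Rightarrow> real"
  assumes g: "has_weak_deriv l g h" and \<psi>: "L-lipschitz_on {0..l} \<psi>"
    and ends: "\<psi> l * g l = \<psi> 0 * g 0" and "l \<ge> 0"
  shows "\<bar>integral {0..l} (\<lambda>x. \<psi> x * h x)\<bar> \<le> L * integral {0..l} (\<lambda>x. \<bar>g x\<bar>)"
proof -
  have "L \<ge> 0" using \<psi> by (rule lipschitz_on_nonneg)
  have h: "h absolutely_integrable_on {0..l}" using g by (rule has_weak_derivD)
  have \<psi>_cont: "continuous_on {0..l} \<psi>" using \<psi> by (rule lipschitz_on_continuous_on)
  have \<psi>_lip: "\<bar>\<psi> x - \<psi> y\<bar> \<le> L * \<bar>x - y\<bar>" if "x \<in> {0..l}" "y \<in> {0..l}" for x y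
    using lipschitz_onD[OF \<psi> that] by (simp add: dist_real_def)
  have habs: "(\<lambda>x. \<bar>h x\<bar>) integrable_on {0..l}" using g by (rule has_weak_deriv_integrable_on) simp
  have gabs: "(\<lambda>x. \<bar>g x\<bar>) integrable_on {0..l}"
    using has_weak_deriv_continuous_on[OF g] by (intro integrable_continuous_interval continuous_intros)
  have approx: "\<bar>integral {0..l} (\<lambda>x. \<psi> x * h x)\<bar>
      \<le> L * integral {0..l} (\<lambda>x. \<bar>g x\<bar>) + d * (2 * L * integral {0..l} (\<lambda>x. \<bar>h x\<bar>))"
    if "d > 0" for d
  proof -
    obtain t n where mono: "mono t" and t0: "t 0 = 0" and tn: "t n = l"
      and mesh: "\<And>i. t (Suc i) - t i \<le> d" and pieces: "\<And>i. i < n \<Longrightarrow> {t i..t (Suc i)} \<subseteq> {0..l}"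
      using fine_partition_exists[OF \<open>l \<ge> 0\<close> \<open>d > 0\<close>] by blast
    have t: "t i \<in> {0..l}" "t (Suc i) \<in> {0..l}" "t i \<le> t (Suc i)" if "i < n" for i
      using pieces[OF that] monoD[OF mono, of i "Suc i"] by auto
    define S where "S = (\<Sum>i<n. \<psi> (t i) * integral {t i..t (Suc i)} h)"
    have "\<bar>integral {0..l} (\<lambda>x. \<psi> x * h x) - S\<bar> \<le> (L * d) * integral {0..l} (\<lambda>x. \<bar>h x\<bar>)"
    proof -
      have "\<bar>\<psi> x - \<psi> (t i)\<bar> \<le> L * d" if "i < n" "x \<in> {t i..t (Suc i)}" for i x
      proof -
        have "\<bar>\<psi> x - \<psi> (t i)\<bar> \<le> L * \<bar>x - t i\<bar>" using that pieces[OF that(1)] by (intro \<psi>_lip) auto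
        also have "\<dots> \<le> L * d" using that mesh[of i] \<open>L \<ge> 0\<close> by (intro mult_left_mono) auto
        finally show ?thesis .
      qed
      from Riemann_sum_error_bound[where t = t and n = n and h = h and \<psi> = \<psi> and \<delta> = "L * d",
          unfolded t0 tn, OF mono h \<psi>_cont this]
      show ?thesis unfolding S_def .
    qed
    moreover have "\<bar>S\<bar> \<le> L * integral {0..l} (\<lambda>x. \<bar>g x\<bar>) + L * d * integral {0..l} (\<lambda>x. \<bar>h x\<bar>)"
    proof -
      have "S = (\<Sum>i<n. \<psi> (t i) * (g (t (Suc i)) - g (t i)))"
        unfolding S_def by (rule sum.cong) (auto simp: has_weak_deriv_integral_diff[OF g t, symmetric])
      also have "\<dots> = (\<Sum>i<n. (\<psi> (t i) - \<psi> (t (Suc i))) * g (t (Suc i)))"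
        using ends by (intro summation_by_parts_closed) (simp add: t0 tn)
      finally have "\<bar>S\<bar> \<le> (\<Sum>i<n. \<bar>\<psi> (t i) - \<psi> (t (Suc i))\<bar> * \<bar>g (t (Suc i))\<bar>)"
        by (metis (no_types, lifting) abs_mult sum.cong sum_abs)
      also have "\<dots> \<le> (\<Sum>i<n. L * (integral {t i..t (Suc i)} (\<lambda>x. \<bar>g x\<bar>)
                                  + d * integral {t i..t (Suc i)} (\<lambda>x. \<bar>h x\<bar>)))"
      proof (rule sum_mono)
        fix i assume "i \<in> {..<n}"
        then have i: "i < n" by simp
        let ?\<Delta> = "t (Suc i) - t i"
        have "integral {t i..t (Suc i)} (\<lambda>x. \<bar>h x\<bar>) \<ge> 0"
          using t[OF i] by (intro integral_nonneg integrable_on_subinterval[OF habs]) auto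
        then have "?\<Delta> * \<bar>g (t (Suc i))\<bar>
            \<le> integral {t i..t (Suc i)} (\<lambda>x. \<bar>g x\<bar>) + d * integral {t i..t (Suc i)} (\<lambda>x. \<bar>h x\<bar>)"
          using has_weak_deriv_endpoint_bound[OF g t[OF i]] mult_right_mono[OF mesh[of i]] by fastforce
        moreover have "\<bar>\<psi> (t i) - \<psi> (t (Suc i))\<bar> \<le> L * ?\<Delta>"
          using \<psi>_lip[OF t(1,2)[OF i]] t(3)[OF i] by simp
        then have "\<bar>\<psi> (t i) - \<psi> (t (Suc i))\<bar> * \<bar>g (t (Suc i))\<bar> \<le> L * (?\<Delta> * \<bar>g (t (Suc i))\<bar>)"
          by (metis abs_ge_zero mult.assoc mult_right_mono)
        ultimately show "\<bar>\<psi> (t i) - \<psi> (t (Suc i))\<bar> * \<bar>g (t (Suc i))\<bar>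
            \<le> L * (integral {t i..t (Suc i)} (\<lambda>x. \<bar>g x\<bar>) + d * integral {t i..t (Suc i)} (\<lambda>x. \<bar>h x\<bar>))"
          using mult_left_mono[OF _ \<open>L \<ge> 0\<close>] by (meson order_trans)
      qed
      also have "\<dots> = L * integral {0..l} (\<lambda>x. \<bar>g x\<bar>) + L * d * integral {0..l} (\<lambda>x. \<bar>h x\<bar>)"
        using integral_sum_partition[OF mono, of "\<lambda>x. \<bar>g x\<bar>" n, unfolded t0 tn, OF gabs]
          integral_sum_partition[OF mono, of "\<lambda>x. \<bar>h x\<bar>" n, unfolded t0 tn, OF habs]
        by (simp add: sum.distrib sum_distrib_left distrib_left mult.assoc)
      finally show ?thesis .
    qed
    ultimately show ?thesis by (simp add: algebra_simps)
  qed
  have "2 * L * integral {0..l} (\<lambda>x. \<bar>h x\<bar>) \<ge> 0"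
    using habs \<open>L \<ge> 0\<close> by (intro mult_nonneg_nonneg integral_nonneg) auto
  from le_of_forall_pos_le_add_mult[OF this approx] show ?thesis .
qed

(* wderiv picks some weak derivative with SOME; weak derivatives agree only almost everywhere,
   so only their pairings with test functions are determined. *)
lemma pair_density_weak_deriv_unique:
  assumes "has_weak_deriv l f g\<^sub>1" "has_weak_deriv l f g\<^sub>2" "L-lipschitz_on {0..l} \<psi>" "l \<ge> 0"
  shows "pair_density l g\<^sub>1 \<psi> = pair_density l g\<^sub>2 \<psi>"
proof -
  have "has_weak_deriv l (\<lambda>_. 0) (\<lambda>s. g\<^sub>1 s - g\<^sub>2 s)"
    using has_weak_deriv_diff[OF assms(1,2)] by simp
  from periodic_integration_by_parts_bound[OF this assms(3) _ assms(4)]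
  have "integral {0..l} (\<lambda>s. \<psi> s * (g\<^sub>1 s - g\<^sub>2 s)) = 0" by simp
  moreover have "(\<lambda>s. \<psi> s * g s) integrable_on {0..l}" if "has_weak_deriv l f g" for g
    using continuous_on_mult_absolutely_integrable[OF lipschitz_on_continuous_on[OF assms(3)]
        has_weak_derivD(1)[OF that]]
    by (simp add: absolutely_integrable_on_def)
  ultimately show ?thesis
    using assms(1,2) by (simp add: pair_density_def right_diff_distrib integral_diff)
qed

lemma first_order_remainder_le:
  fixes F F' :: "real \<Rightarrow> real"
  assumes F: "\<And>x. (F has_real_derivative F' x) (at x)" and F': "M-lipschitz_on UNIV F'"
  shows "\<bar>F b - F a - F' a * (b - a)\<bar> \<le> M * (b - a)\<^sup>2"
proof -
  obtain z where z: "\<bar>z - a\<bar> \<le> \<bar>b - a\<bar>" and mvt: "F b - F a = (b - a) * F' z"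
  proof (cases a b rule: linorder_cases)
    case less
    then show ?thesis using MVT2[OF less F] that by force
  next
    case greater
    then obtain z where "b < z" "z < a" "F a - F b = (a - b) * F' z" using MVT2[OF greater F] by blast
    then show ?thesis using that[of z] by (simp add: algebra_simps)
  qed (use that in simp)
  have "\<bar>F b - F a - F' a * (b - a)\<bar> = \<bar>F' z - F' a\<bar> * \<bar>b - a\<bar>"
    by (simp add: mvt abs_mult flip: left_diff_distrib mult.commute)
  also have "\<dots> \<le> (M * \<bar>b - a\<bar>) * \<bar>b - a\<bar>"
    using lipschitz_on_normD[OF F', of z a] z lipschitz_on_nonneg[OF F']
    by (intro mult_right_mono) (auto intro: order_trans mult_left_mono)
  finally show ?thesis by (simp add: power2_eq_square)
qed

lemma compose_increment_bound:
  fixes F F' \<phi> h :: "real \<Rightarrow> real"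
  assumes \<phi>: "has_weak_deriv l \<phi> h"
    and F: "\<And>x. (F has_real_derivative F' x) (at x)" and F': "M-lipschitz_on UNIV F'"
    and xy: "x \<in> {0..l}" "y \<in> {0..l}" "x \<le> y" and osc: "\<bar>\<phi> y - \<phi> x\<bar> \<le> \<eta>"
  shows "\<bar>F (\<phi> y) - F (\<phi> x) - F' (\<phi> x) * integral {x..y} h\<bar> \<le> M * \<eta> * integral {x..y} (\<lambda>s. \<bar>h s\<bar>)"
proof -
  have "M \<ge> 0" using F' by (rule lipschitz_on_nonneg)
  have "\<bar>F (\<phi> y) - F (\<phi> x) - F' (\<phi> x) * integral {x..y} h\<bar> \<le> M * (\<phi> y - \<phi> x)\<^sup>2"
    using first_order_remainder_le[OF F F'] has_weak_deriv_integral_diff[OF \<phi> xy] by metis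
  also have "\<dots> = M * (\<bar>\<phi> y - \<phi> x\<bar> * \<bar>\<phi> y - \<phi> x\<bar>)" by (simp add: power2_eq_square)
  also have "\<dots> \<le> M * (\<eta> * integral {x..y} (\<lambda>s. \<bar>h s\<bar>))"
    using osc has_weak_deriv_abs_diff_le[OF \<phi> xy] \<open>M \<ge> 0\<close>
    by (intro mult_left_mono mult_mono) auto
  finally show ?thesis by (simp add: mult.assoc)
qed

(* F o phi differs from the Riemann sums of (F' o phi) h by first-order Taylor remainders,
   which are O(eta) on a partition where phi oscillates by at most eta. *)
lemma compose_partition_bound:
  fixes F F' \<phi> h :: "real \<Rightarrow> real" and t :: "nat \<Rightarrow> real"
  assumes \<phi>: "has_weak_deriv l \<phi> h"
    and F: "\<And>x. (F has_real_derivative F' x) (at x)" and F': "M-lipschitz_on UNIV F'"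
    and t: "mono t" "t 0 = 0" "t n \<le> l"
    and osc: "\<And>i x. i < n \<Longrightarrow> x \<in> {t i..t (Suc i)} \<Longrightarrow> \<bar>\<phi> x - \<phi> (t i)\<bar> \<le> \<eta>"
  shows "\<bar>F (\<phi> (t n)) - F (\<phi> 0) - integral {0..t n} (\<lambda>x. F' (\<phi> x) * h x)\<bar>
          \<le> \<eta> * (2 * M * integral {0..t n} (\<lambda>x. \<bar>h x\<bar>))"
proof -
  let ?S = "\<Sum>i<n. F' (\<phi> (t i)) * integral {t i..t (Suc i)} h"
  have "M \<ge> 0" using F' by (rule lipschitz_on_nonneg)
  have sub: "{t 0..t n} \<subseteq> {0..l}" using t by auto
  have pieces: "t i \<in> {0..l}" "t (Suc i) \<in> {0..l}" "t i \<le> t (Suc i)" if "i < n" for i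
    using t monoD[OF t(1), of 0 i] monoD[OF t(1), of "Suc i" n] monoD[OF t(1), of i "Suc i"] that by auto
  have h: "h absolutely_integrable_on {t 0..t n}"
    using has_weak_derivD(1)[OF \<phi>] sub by (rule absolutely_integrable_on_subinterval)
  have F'_cont: "continuous_on {t 0..t n} (\<lambda>x. F' (\<phi> x))"
    using continuous_on_compose2[OF lipschitz_on_continuous_on[OF F']
        continuous_on_subset[OF has_weak_deriv_continuous_on[OF \<phi>] sub]] by simp
  have "\<bar>F' (\<phi> x) - F' (\<phi> (t i))\<bar> \<le> M * \<eta>" if "i < n" "x \<in> {t i..t (Suc i)}" for i x
    using lipschitz_on_normD[OF F', of "\<phi> x" "\<phi> (t i)"] osc[OF that] \<open>M \<ge> 0\<close>
    by (auto intro: order_trans mult_left_mono)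
  from Riemann_sum_error_bound[OF t(1) h F'_cont this]
  have Riemann: "\<bar>integral {t 0..t n} (\<lambda>x. F' (\<phi> x) * h x) - ?S\<bar> \<le> M * \<eta> * integral {t 0..t n} (\<lambda>x. \<bar>h x\<bar>)" .
  have "\<bar>(F (\<phi> (t n)) - F (\<phi> (t 0))) - ?S\<bar>
      = \<bar>\<Sum>i<n. F (\<phi> (t (Suc i))) - F (\<phi> (t i)) - F' (\<phi> (t i)) * integral {t i..t (Suc i)} h\<bar>"
    using sum_lessThan_telescope[of "\<lambda>i. F (\<phi> (t i))" n] by (simp add: sum_subtractf)
  also have "\<dots> \<le> (\<Sum>i<n. M * \<eta> * integral {t i..t (Suc i)} (\<lambda>x. \<bar>h x\<bar>))"
    using osc pieces
    by (intro order_trans[OF sum_abs sum_mono] compose_increment_bound[OF \<phi> F F']) auto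
  also have "\<dots> = M * \<eta> * integral {t 0..t n} (\<lambda>x. \<bar>h x\<bar>)"
    using h unfolding absolutely_integrable_on_def
    by (simp add: integral_sum_partition[OF t(1), of _ n] sum_distrib_left)
  finally show ?thesis
    using Riemann t(2) by (simp add: algebra_simps)
qed

lemma has_weak_deriv_compose:
  fixes F F' \<phi> h :: "real \<Rightarrow> real"
  assumes \<phi>: "has_weak_deriv l \<phi> h"
    and F: "\<And>x. (F has_real_derivative F' x) (at x)" and F': "M-lipschitz_on UNIV F'"
  shows "has_weak_deriv l (\<lambda>x. F (\<phi> x)) (\<lambda>x. F' (\<phi> x) * h x)"
proof (rule has_weak_derivI)
  have "M \<ge> 0" using F' by (rule lipschitz_on_nonneg)
  have \<phi>_cont: "continuous_on {0..l} \<phi>" using \<phi> by (rule has_weak_deriv_continuous_on)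
  show "(\<lambda>x. F' (\<phi> x) * h x) absolutely_integrable_on {0..l}"
    using lipschitz_on_continuous_on[OF F'] \<phi>_cont has_weak_derivD(1)[OF \<phi>]
    by (intro continuous_on_mult_absolutely_integrable) (auto intro: continuous_on_compose2)
  fix s assume s: "s \<in> {0..l}"
  have approx: "\<bar>F (\<phi> s) - F (\<phi> 0) - integral {0..s} (\<lambda>x. F' (\<phi> x) * h x)\<bar>
      \<le> 0 + \<eta> * (2 * M * integral {0..s} (\<lambda>x. \<bar>h x\<bar>))" if "\<eta> > 0" for \<eta>
  proof -
    have "uniformly_continuous_on {0..s} \<phi>"
      using s by (intro compact_uniformly_continuous continuous_on_subset[OF \<phi>_cont]) auto
    then obtain \<delta> where "\<delta> > 0"
      and \<delta>: "\<forall>x\<in>{0..s}. \<forall>y\<in>{0..s}. dist y x < \<delta> \<longrightarrow> dist (\<phi> y) (\<phi> x) < \<eta>"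
      using \<open>\<eta> > 0\<close> unfolding uniformly_continuous_on_def by blast
    have "0 \<le> s" "\<delta> / 2 > 0" using s \<open>\<delta> > 0\<close> by auto
    then obtain t n where t: "mono t" "t 0 = 0" "t n = s"
      and mesh: "\<And>i. t (Suc i) - t i \<le> \<delta> / 2" and pieces: "\<And>i. i < n \<Longrightarrow> {t i..t (Suc i)} \<subseteq> {0..s}"
      by (rule fine_partition_exists) blast
    have osc: "\<bar>\<phi> x - \<phi> (t i)\<bar> \<le> \<eta>" if "i < n" "x \<in> {t i..t (Suc i)}" for i x
    proof -
      have "x \<in> {0..s}" "t i \<in> {0..s}" using pieces[OF that(1)] that(2) by auto
      moreover have "dist x (t i) < \<delta>"
        using that(2) mesh[of i] \<open>\<delta> > 0\<close> by (simp add: dist_real_def)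
      ultimately have "dist (\<phi> x) (\<phi> (t i)) < \<eta>" using \<delta> by blast
      then show ?thesis by (simp add: dist_real_def)
    qed
    have "t n \<le> l" using t(3) s by simp
    from compose_partition_bound[OF \<phi> F F' t(1,2) this osc]
    show ?thesis unfolding t(3) by simp
  qed
  have "(\<lambda>x. \<bar>h x\<bar>) integrable_on {0..s}" using s by (intro has_weak_deriv_integrable_on[OF \<phi>]) auto
  then have "2 * M * integral {0..s} (\<lambda>x. \<bar>h x\<bar>) \<ge> 0"
    using \<open>M \<ge> 0\<close> by (intro mult_nonneg_nonneg integral_nonneg) auto
  from le_of_forall_pos_le_add_mult[OF this approx]
  show "F (\<phi> s) = F (\<phi> 0) + integral {0..s} (\<lambda>x. F' (\<phi> x) * h x)" by simp
qed

section \<open>The function Phi\<close>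

lemma sqrt_one_minus_cos: "2 * sqrt (1 - cos t) = 2 * sqrt 2 * \<bar>sin (t / 2)\<bar>"
proof -
  have "1 - cos t = 2 * sin (t / 2) ^ 2" using cos_double_sin[of "t / 2"] by simp
  then show ?thesis by (simp add: real_sqrt_mult)
qed

lemma Phi_0 [simp]: "Phi 0 = 0"
  by (simp add: Phi_def)

lemma Phi_eq_integral_diff:
  assumes "a \<le> 0" "a \<le> r"
  shows "Phi r = integral {a..r} (\<lambda>t. 2 * sqrt (1 - cos t)) - integral {a..0} (\<lambda>t. 2 * sqrt (1 - cos t))"
proof -
  have int: "(\<lambda>t. 2 * sqrt (1 - cos t)) integrable_on {u..v}" for u v
    by (intro integrable_continuous_interval continuous_intros)
  show ?thesis
  proof (cases "0 \<le> r")
    case True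
    then show ?thesis
      using Henstock_Kurzweil_Integration.integral_combine[OF assms(1) True int] by (simp add: Phi_def)
  next
    case False
    then show ?thesis
      using Henstock_Kurzweil_Integration.integral_combine[OF assms(2) _ int, of 0] by (simp add: Phi_def)
  qed
qed

lemma Phi_has_real_derivative: "(Phi has_real_derivative 2 * sqrt 2 * \<bar>sin (x / 2)\<bar>) (at x)"
proof -
  define a where "a = - \<bar>x\<bar> - 1"
  define b where "b = \<bar>x\<bar> + 1"
  have x: "x \<in> {a<..<b}" by (auto simp: a_def b_def)
  have "((\<lambda>u. integral {a..u} (\<lambda>t. 2 * sqrt (1 - cos t))) has_real_derivative 2 * sqrt (1 - cos x))
      (at x within {a..b})"
    using x by (intro integral_has_real_derivative continuous_intros) auto
  moreover have "at x within {a..b} = at x"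
    using x by (intro at_within_interior) auto
  ultimately have "((\<lambda>u. integral {a..u} (\<lambda>t. 2 * sqrt (1 - cos t)) - integral {a..0} (\<lambda>t. 2 * sqrt (1 - cos t)))
      has_real_derivative 2 * sqrt (1 - cos x) - 0) (at x)"
    by (intro DERIV_diff DERIV_const) simp
  then show ?thesis
    unfolding sqrt_one_minus_cos[symmetric] diff_zero
  proof (rule has_field_derivative_transform_within_open[OF _ _ x])
    fix y assume "y \<in> {a<..<b}"
    then show "integral {a..y} (\<lambda>t. 2 * sqrt (1 - cos t)) - integral {a..0} (\<lambda>t. 2 * sqrt (1 - cos t)) = Phi y"
      using Phi_eq_integral_diff[of a y] by (auto simp: a_def)
  qed simp
qed

lemma Phi_2pi: "Phi (2 * pi) = 8 * sqrt 2"
proof -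
  define G where "G t = - 4 * sqrt 2 * cos (t / 2)" for t
  have "((\<lambda>t. 2 * sqrt (1 - cos t)) has_integral (G (2 * pi) - G 0)) {0..2 * pi}"
  proof (rule fundamental_theorem_of_calculus)
    fix t assume t: "t \<in> {0..2 * pi}"
    then have "sin (t / 2) \<ge> 0" by (intro sin_ge_zero) auto
    then have eq: "2 * sqrt (1 - cos t) = 2 * sqrt 2 * sin (t / 2)" by (simp add: sqrt_one_minus_cos)
    have "(G has_real_derivative 2 * sqrt 2 * sin (t / 2)) (at t within {0..2 * pi})"
      unfolding G_def by (auto intro!: derivative_eq_intros)
    then show "(G has_vector_derivative 2 * sqrt (1 - cos t)) (at t within {0..2 * pi})"
      unfolding eq has_real_derivative_iff_has_vector_derivative .
  qed simp
  from integral_unique[OF this] show ?thesis by (simp add: Phi_def G_def)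
qed

lemma Phi_add_2pi: "Phi (x + 2 * pi) = Phi x + 8 * sqrt 2"
proof -
  have "((\<lambda>x. Phi (x + 2 * pi) - Phi x) has_real_derivative 0) (at x)" for x
  proof -
    have "((\<lambda>x. Phi (x + 2 * pi)) has_real_derivative 2 * sqrt 2 * \<bar>sin ((x + 2 * pi) / 2)\<bar> * (1 + 0)) (at x)"
      by (rule DERIV_chain2[OF Phi_has_real_derivative]) (intro DERIV_add DERIV_ident DERIV_const)
    moreover have "\<bar>sin ((x + 2 * pi) / 2)\<bar> = \<bar>sin (x / 2)\<bar>" by (simp add: add_divide_distrib)
    ultimately show ?thesis using DERIV_diff[OF _ Phi_has_real_derivative[of x]] by fastforce
  qed
  then have "Phi (x + 2 * pi) - Phi x = Phi (0 + 2 * pi) - Phi 0"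
    by (intro DERIV_isconst_all[of "\<lambda>x. Phi (x + 2 * pi) - Phi x"]) blast
  then show ?thesis by (simp add: Phi_2pi)
qed

lemma abs_sin_diff_le:
  fixes a b :: real
  shows "\<bar>sin a - sin b\<bar> \<le> \<bar>a - b\<bar>"
proof -
  have "\<bar>sin a - sin b\<bar> = 2 * \<bar>sin ((a - b) / 2)\<bar> * \<bar>cos ((a + b) / 2)\<bar>"
    by (simp only: sin_diff_sin abs_mult abs_numeral)
  also have "\<dots> \<le> 2 * \<bar>(a - b) / 2\<bar> * 1"
    by (intro mult_mono mult_left_mono abs_sin_x_le_abs_x abs_cos_le_one) auto
  finally show ?thesis by simp
qed

lemma Phi_derivative_lipschitz: "(sqrt 2)-lipschitz_on UNIV (\<lambda>x. 2 * sqrt 2 * \<bar>sin (x / 2)\<bar>)"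
proof (rule lipschitz_onI)
  fix x y :: real
  have "dist (2 * sqrt 2 * \<bar>sin (x / 2)\<bar>) (2 * sqrt 2 * \<bar>sin (y / 2)\<bar>)
      = 2 * sqrt 2 * \<bar>\<bar>sin (x / 2)\<bar> - \<bar>sin (y / 2)\<bar>\<bar>"
    by (simp add: dist_real_def abs_mult flip: right_diff_distrib)
  also have "\<dots> \<le> 2 * sqrt 2 * \<bar>x / 2 - y / 2\<bar>"
    using abs_sin_diff_le[of "x / 2" "y / 2"] by (intro mult_left_mono) auto
  also have "\<dots> = sqrt 2 * dist x y" by (simp add: dist_real_def flip: diff_divide_distrib)
  finally show "dist (2 * sqrt 2 * \<bar>sin (x / 2)\<bar>) (2 * sqrt 2 * \<bar>sin (y / 2)\<bar>) \<le> sqrt 2 * dist x y" .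
qed simp

lemma abs_Phi_le: "\<bar>Phi x\<bar> \<le> 2 * sqrt 2 * \<bar>x\<bar>"
proof -
  have "\<bar>Phi v - Phi u\<bar> \<le> 2 * sqrt 2 * (v - u)" if "u < v" for u v
  proof -
    have der: "(Phi has_real_derivative 2 * sqrt 2 * \<bar>sin (z / 2)\<bar>) (at z)" if "u \<le> z" "z \<le> v" for z
      by (rule Phi_has_real_derivative)
    obtain z where "Phi v - Phi u = (v - u) * (2 * sqrt 2 * \<bar>sin (z / 2)\<bar>)"
      using MVT2[OF \<open>u < v\<close> der] by blast
    then show ?thesis
      using that abs_sin_le_one[of "z / 2"] by (simp add: abs_mult mult_left_le)
  qed
  from this[of 0 x] this[of x 0] show ?thesis by (cases x "0::real" rule: linorder_cases) auto
qed

(* The factor 2 pi / (8 sqrt 2) cancels the growth 8 sqrt 2 of Phi over one period,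
   see Phi_add_2pi. *)
definition Phi_defect :: "real \<Rightarrow> real" where
  "Phi_defect x = 2 * pi / (8 * sqrt 2) * Phi x - x"

lemma Phi_defect_add_2pi: "Phi_defect (x + 2 * pi) = Phi_defect x"
  unfolding Phi_defect_def Phi_add_2pi by (simp add: field_simps)

lemma Phi_defect_periodic: "Phi_defect (x + 2 * pi * of_int k) = Phi_defect x"
proof (induction k rule: int_induct[where k = 0])
  case (step1 i)
  then show ?case using Phi_defect_add_2pi[of "x + 2 * pi * of_int i"] by (simp add: algebra_simps)
next
  case (step2 i)
  then show ?case using Phi_defect_add_2pi[of "x + 2 * pi * of_int (i - 1)"] by (simp add: algebra_simps)
qed simp

lemma abs_Phi_defect_le: "\<bar>Phi_defect x\<bar> \<le> 3 * \<bar>x\<bar>"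
proof -
  have "\<bar>Phi_defect x\<bar> \<le> 2 * pi / (8 * sqrt 2) * \<bar>Phi x\<bar> + \<bar>x\<bar>"
    unfolding Phi_defect_def using abs_triangle_ineq4[of "2 * pi / (8 * sqrt 2) * Phi x" x]
    by (simp add: abs_mult)
  also have "\<dots> \<le> 2 * pi / (8 * sqrt 2) * (2 * sqrt 2 * \<bar>x\<bar>) + \<bar>x\<bar>"
    using abs_Phi_le by (intro add_right_mono mult_left_mono) auto
  also have "\<dots> = (pi / 2 + 1) * \<bar>x\<bar>" by (simp add: field_simps)
  also have "\<dots> \<le> 3 * \<bar>x\<bar>" using pi_less_4 by (intro mult_right_mono) auto
  finally show ?thesis .
qed

lemma norm_cis_minus_one: "cmod (cis x - 1) = 2 * \<bar>sin (x / 2)\<bar>"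
proof -
  have "(cmod (cis x - 1))\<^sup>2 = (cos x - 1)\<^sup>2 + (sin x)\<^sup>2" by (simp add: cmod_power2)
  also have "\<dots> = 2 - 2 * cos x" by (simp add: power2_diff sin_squared_eq algebra_simps)
  also have "\<dots> = (2 * \<bar>sin (x / 2)\<bar>)\<^sup>2" using cos_double_sin[of "x / 2"] by (simp add: power_mult_distrib)
  finally show ?thesis by (rule power2_eq_imp_eq) auto
qed

lemma sin_ge_third:
  fixes z :: real
  assumes "0 \<le> z" "z \<le> 2"
  shows "z / 3 \<le> sin z"
proof -
  have "\<bar>sin z - z\<bar> \<le> z ^ 3 / 6"
    using Maclaurin_sin_bound[of z 3] assms by (simp add: sin_coeff_def eval_nat_numeral)
  moreover have "z ^ 3 \<le> 4 * z"
    using mult_right_mono[OF power_mono[OF assms(2) assms(1), of 2] assms(1)]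
    by (simp add: power2_eq_square power3_eq_cube)
  ultimately show ?thesis by linarith
qed

lemma abs_le_norm_cis_minus_one:
  assumes "\<bar>x\<bar> \<le> pi"
  shows "\<bar>x\<bar> \<le> 3 * cmod (cis x - 1)"
proof -
  have "\<bar>sin (x / 2)\<bar> = \<bar>sin (\<bar>x\<bar> / 2)\<bar>" by (cases "x \<ge> 0") simp_all
  also have "\<dots> = sin (\<bar>x\<bar> / 2)" using assms by (intro abs_of_nonneg sin_ge_zero) auto
  finally have "\<bar>sin (x / 2)\<bar> = sin (\<bar>x\<bar> / 2)" .
  moreover have "\<bar>x\<bar> / 2 / 3 \<le> sin (\<bar>x\<bar> / 2)"
    using assms pi_less_4 by (intro sin_ge_third) auto
  ultimately show ?thesis by (simp add: norm_cis_minus_one)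
qed

lemma abs_Phi_defect_le_norm_cis: "\<bar>Phi_defect x\<bar> \<le> 9 * cmod (cis x - 1)"
proof -
  define k where "k = \<lfloor>(x + pi) / (2 * pi)\<rfloor>"
  define y where "y = x - 2 * pi * of_int k"
  have "of_int k \<le> (x + pi) / (2 * pi)" "(x + pi) / (2 * pi) < of_int k + 1"
    unfolding k_def by linarith+
  then have "2 * pi * of_int k \<le> x + pi" "x + pi < 2 * pi * of_int k + 2 * pi"
    by (simp_all add: field_simps)
  then have y: "\<bar>y\<bar> \<le> pi" unfolding y_def by auto
  have x: "x = y + 2 * pi * of_int k" by (simp add: y_def)
  have "\<bar>Phi_defect x\<bar> = \<bar>Phi_defect y\<bar>" unfolding x Phi_defect_periodic ..
  also have "\<dots> \<le> 3 * \<bar>y\<bar>" by (rule abs_Phi_defect_le)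
  also have "\<dots> \<le> 9 * cmod (cis y - 1)" using abs_le_norm_cis_minus_one[OF y] by simp
  also have "cis y = cis x" by (simp add: x flip: cis_mult)
  finally show ?thesis .
qed

lemma Phi_defect_cis_cong:
  assumes "cis a = cis b"
  shows "Phi_defect a = Phi_defect b"
proof -
  have "sin a = sin b \<and> cos a = cos b" using assms by (simp add: complex_eq_iff)
  then obtain k :: int where "a = b + 2 * pi * k" by (auto simp: sin_cos_eq_iff)
  then show ?thesis by (simp add: Phi_defect_periodic)
qed

lemma continuous_on_Phi_defect: "continuous_on S Phi_defect"
  unfolding Phi_defect_def using DERIV_isCont[OF Phi_has_real_derivative]
  by (intro continuous_intros continuous_at_imp_continuous_on) auto

lemma norm_cis_diff: "cmod (cis a - cis b) = cmod (cis (a - b) - 1)"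
proof -
  have "cis (a - b) - 1 = (cis a - cis b) / cis b" by (simp add: diff_divide_distrib flip: cis_divide)
  then show ?thesis by (simp add: norm_divide)
qed

lemma integral_abs_Phi_defect_le:
  fixes T \<theta> :: "real \<Rightarrow> real"
  assumes T: "continuous_on {0..l} T" and \<theta>: "continuous_on {0..l} \<theta>" and "\<delta> > 0" "l \<ge> 0"
  shows "integral {0..l} (\<lambda>x. \<bar>Phi_defect (T x - \<theta> x)\<bar>)
    \<le> 9 / (2 * \<delta>) * integral {0..l} (\<lambda>x. (cmod (cis (T x) - cis (\<theta> x)))\<^sup>2) + 9 * \<delta> / 2 * l"
    (is "_ \<le> 9 / (2 * \<delta>) * integral {0..l} (\<lambda>x. (?u x)\<^sup>2) + _")
proof -
  have u: "continuous_on {0..l} ?u"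
    by (intro continuous_intros continuous_on_compose2[OF continuous_on_cis T]
        continuous_on_compose2[OF continuous_on_cis \<theta>]) auto
  have "\<bar>Phi_defect (T x - \<theta> x)\<bar> \<le> 9 / (2 * \<delta>) * (?u x)\<^sup>2 + 9 * \<delta> / 2" for x
  proof -
    have "\<bar>Phi_defect (T x - \<theta> x)\<bar> \<le> 9 * ?u x"
      using abs_Phi_defect_le_norm_cis[of "T x - \<theta> x"] by (simp add: norm_cis_diff)
    moreover have "2 * \<delta> * ?u x \<le> (?u x)\<^sup>2 + \<delta>\<^sup>2"
      using sum_squares_bound[of \<delta> "?u x"] by (simp add: algebra_simps)
    then have "?u x \<le> (?u x)\<^sup>2 / (2 * \<delta>) + \<delta> / 2"
      using \<open>\<delta> > 0\<close> by (simp add: field_simps power2_eq_square)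
    ultimately have "\<bar>Phi_defect (T x - \<theta> x)\<bar> \<le> 9 * ((?u x)\<^sup>2 / (2 * \<delta>) + \<delta> / 2)"
      by (meson order_trans mult_left_mono zero_le_numeral)
    then show ?thesis by (simp add: algebra_simps)
  qed
  then have "integral {0..l} (\<lambda>x. \<bar>Phi_defect (T x - \<theta> x)\<bar>)
      \<le> integral {0..l} (\<lambda>x. 9 / (2 * \<delta>) * (?u x)\<^sup>2 + 9 * \<delta> / 2)"
    using T \<theta> u
    by (intro integral_le integrable_continuous_interval continuous_intros
        continuous_on_compose2[OF continuous_on_Phi_defect]) auto
  also have "\<dots> = 9 / (2 * \<delta>) * integral {0..l} (\<lambda>x. (?u x)\<^sup>2) + 9 * \<delta> / 2 * l"
  proof -
    have "(\<lambda>x. (?u x)\<^sup>2) integrable_on {0..l}"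
      using u T \<theta> by (intro integrable_continuous_interval continuous_intros)
    from integral_add[OF integrable_on_mult_right[OF this, of "9 / (2 * \<delta>)"] integrable_const_ivl]
    show ?thesis using \<open>l \<ge> 0\<close> by simp
  qed
  finally show ?thesis .
qed

section \<open>Flat norm\<close>

lemma flat_testD:
  assumes "flat_test l \<psi>"
  obtains L where "0 \<le> L" "L \<le> 1" "L-lipschitz_on {0..l} \<psi>" "\<And>s. s \<in> {0..l} \<Longrightarrow> \<bar>\<psi> s\<bar> \<le> 1 - L"
    | "l < 0"
proof (cases "l \<ge> 0")
  case True
  obtain L where L: "L-lipschitz_on {0..l} \<psi>" and bound: "\<forall>s\<in>{0..l}. \<bar>\<psi> s\<bar> + L \<le> 1"
    using assms unfolding flat_test_def by blast
  have "\<bar>\<psi> 0\<bar> + L \<le> 1" using bound True by simp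
  then have "L \<le> 1" by linarith
  moreover have "\<bar>\<psi> s\<bar> \<le> 1 - L" if "s \<in> {0..l}" for s using bspec[OF bound that] by linarith
  ultimately show ?thesis using that(1) L lipschitz_on_nonneg[OF L] by blast
qed (use that(2) in simp)

lemma flat_test_lipschitz:
  assumes "flat_test l \<psi>"
  shows "1-lipschitz_on {0..l} \<psi>"
  using assms
proof (cases rule: flat_testD)
  case (1 L)
  from lipschitz_on_le[OF 1(3,2)] show ?thesis .
qed (simp add: lipschitz_on_def)

lemma flat_test_abs_le:
  assumes "flat_test l \<psi>" and "s \<in> {0..l}"
  shows "\<bar>\<psi> s\<bar> \<le> 1"
  using assms(1)
proof (cases rule: flat_testD)
  case (1 L)
  with 1(4)[OF assms(2)] show ?thesis by linarith
qed (use assms(2) in simp)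

lemma flat_test_zero: "flat_test l (\<lambda>_. 0)"
  unfolding flat_test_def by (intro conjI exI[of _ 0]) (auto simp: lipschitz_on_def)

lemma flat_norm_le:
  assumes "\<And>\<psi>. flat_test l \<psi> \<Longrightarrow> \<nu> \<psi> \<le> B"
  shows "flat_norm l \<nu> \<le> B"
  unfolding flat_norm_def using assms flat_test_zero by (intro cSup_least) auto

lemma flat_norm_ge:
  assumes "bdd_above {\<nu> \<psi> | \<psi>. flat_test l \<psi>}" and "flat_test l \<psi>"
  shows "\<nu> \<psi> \<le> flat_norm l \<nu>"
  unfolding flat_norm_def using assms by (intro cSup_upper) auto

lemma flat_norm_zero [simp]: "flat_norm l (\<lambda>_. 0) = 0"
proof -
  have "{0 | \<psi>. flat_test l \<psi>} = {0 :: real}" using flat_test_zero by blast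
  then show ?thesis by (simp add: flat_norm_def)
qed

lemma flat_norm_tendsto_zero_perturb:
  fixes \<mu> \<nu> :: "'a \<Rightarrow> (real \<Rightarrow> real) \<Rightarrow> real"
  assumes close: "\<forall>\<^sub>F k in F. \<forall>\<psi>. flat_test l \<psi> \<longrightarrow> \<bar>\<mu> k \<psi> - \<nu> k \<psi>\<bar> \<le> a k"
    and bdd: "\<forall>\<^sub>F k in F. bdd_above {\<nu> k \<psi> | \<psi>. flat_test l \<psi>}"
    and zero: "\<forall>\<^sub>F k in F. \<mu> k (\<lambda>_. 0) = 0"
    and a: "(a \<longlongrightarrow> 0) F" and \<nu>: "((\<lambda>k. flat_norm l (\<nu> k)) \<longlongrightarrow> 0) F"
  shows "((\<lambda>k. flat_norm l (\<mu> k)) \<longlongrightarrow> 0) F"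
proof (rule tendsto_sandwich[where f = "\<lambda>_. 0" and h = "\<lambda>k. a k + flat_norm l (\<nu> k)"])
  have bounds: "0 \<le> flat_norm l (\<mu> k) \<and> flat_norm l (\<mu> k) \<le> a k + flat_norm l (\<nu> k)"
    if close: "\<forall>\<psi>. flat_test l \<psi> \<longrightarrow> \<bar>\<mu> k \<psi> - \<nu> k \<psi>\<bar> \<le> a k"
      and bdd: "bdd_above {\<nu> k \<psi> | \<psi>. flat_test l \<psi>}" and zero: "\<mu> k (\<lambda>_. 0) = 0" for k
  proof -
    have le: "\<mu> k \<psi> \<le> a k + flat_norm l (\<nu> k)" if "flat_test l \<psi>" for \<psi>
    proof -
      have "\<bar>\<mu> k \<psi> - \<nu> k \<psi>\<bar> \<le> a k" using close that by blast
      with flat_norm_ge[OF bdd that] show ?thesis by linarith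
    qed
    then have "bdd_above {\<mu> k \<psi> | \<psi>. flat_test l \<psi>}"
      by (intro bdd_aboveI[where M = "a k + flat_norm l (\<nu> k)"]) blast
    from flat_norm_ge[OF this flat_test_zero] have "0 \<le> flat_norm l (\<mu> k)" by (simp add: zero)
    with le show ?thesis by (simp add: flat_norm_le)
  qed
  have "\<forall>\<^sub>F k in F. 0 \<le> flat_norm l (\<mu> k) \<and> flat_norm l (\<mu> k) \<le> a k + flat_norm l (\<nu> k)"
    using close bdd zero by eventually_elim (rule bounds)
  then show "\<forall>\<^sub>F k in F. 0 \<le> flat_norm l (\<mu> k)" "\<forall>\<^sub>F k in F. flat_norm l (\<mu> k) \<le> a k + flat_norm l (\<nu> k)"
    by (simp_all add: eventually_conj_iff)
  show "((\<lambda>k. a k + flat_norm l (\<nu> k)) \<longlongrightarrow> 0) F" using tendsto_add[OF a \<nu>] by simp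
qed simp

corollary flat_norm_tendsto_zero:
  assumes "\<forall>\<^sub>F k in F. \<forall>\<psi>. flat_test l \<psi> \<longrightarrow> \<bar>\<mu> k \<psi>\<bar> \<le> a k"
    and "\<forall>\<^sub>F k in F. \<mu> k (\<lambda>_. 0) = 0" and "(a \<longlongrightarrow> 0) F"
  shows "((\<lambda>k. flat_norm l (\<mu> k)) \<longlongrightarrow> 0) F"
proof (rule flat_norm_tendsto_zero_perturb[where \<nu> = "\<lambda>_ _. 0"])
  show "\<forall>\<^sub>F k in F. \<forall>\<psi>. flat_test l \<psi> \<longrightarrow> \<bar>\<mu> k \<psi> - 0\<bar> \<le> a k" using assms(1) by simp
  have "bdd_above {0 :: real | \<psi>. flat_test l \<psi>}" by (rule bdd_aboveI[of _ 0]) blast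
  then show "\<forall>\<^sub>F k in F. bdd_above {0 :: real | \<psi>. flat_test l \<psi>}" by simp
qed (use assms(2,3) in simp_all)

lemma pair_density_zero [simp]: "pair_density l g (\<lambda>_. 0) = 0"
  by (simp add: pair_density_def)

lemma pair_atoms_zero [simp]: "pair_atoms N c p (\<lambda>_. 0) = 0"
  by (simp add: pair_atoms_def)

lemma abs_pair_density_le:
  assumes "flat_test l \<psi>" and g: "g absolutely_integrable_on {0..l}"
  shows "\<bar>pair_density l g \<psi>\<bar> \<le> integral {0..l} (\<lambda>s. \<bar>g s\<bar>)"
proof -
  from lipschitz_on_continuous_on[OF flat_test_lipschitz[OF assms(1)]]
  have "continuous_on {0..l} \<psi>" .
  from continuous_on_mult_absolutely_integrable[OF this g]
  have "norm (integral {0..l} (\<lambda>s. \<psi> s * g s)) \<le> integral {0..l} (\<lambda>s. \<bar>g s\<bar>)"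
    using g flat_test_abs_le[OF assms(1)]
    by (intro integral_norm_bound_integral)
      (auto simp: absolutely_integrable_on_def abs_mult intro: mult_left_le_one_le)
  then show ?thesis by (simp add: pair_density_def)
qed

lemma abs_pair_atoms_le:
  assumes "Mfin_Z l N c p" and "flat_test l \<psi>"
  shows "\<bar>pair_atoms N c p \<psi>\<bar> \<le> 2 * pi * (\<Sum>j<N. \<bar>of_int (c j)\<bar>)"
proof -
  have "\<bar>of_int (c j) * \<psi> (p j)\<bar> \<le> \<bar>of_int (c j)\<bar>" if "j < N" for j
    using assms that flat_test_abs_le[OF assms(2), of "p j"]
    by (auto simp: Mfin_Z_def abs_mult intro: mult_right_le_one_le)
  then have "\<bar>\<Sum>j<N. of_int (c j) * \<psi> (p j)\<bar> \<le> (\<Sum>j<N. \<bar>of_int (c j)\<bar>)"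
    by (intro order_trans[OF sum_abs sum_mono]) auto
  then show ?thesis by (simp add: pair_atoms_def abs_mult)
qed

lemma bdd_above_pair_density_minus_atoms:
  assumes g: "g absolutely_integrable_on {0..l}" and "Mfin_Z l N c p"
  shows "bdd_above {pair_density l g \<psi> - pair_atoms N c p \<psi> | \<psi>. flat_test l \<psi>}"
proof (rule bdd_aboveI[where M = "integral {0..l} (\<lambda>s. \<bar>g s\<bar>) + 2 * pi * (\<Sum>j<N. \<bar>of_int (c j)\<bar>)"])
  fix x assume "x \<in> {pair_density l g \<psi> - pair_atoms N c p \<psi> | \<psi>. flat_test l \<psi>}"
  then obtain \<psi> where \<psi>: "flat_test l \<psi>" and x: "x = pair_density l g \<psi> - pair_atoms N c p \<psi>" by blast
  from abs_pair_density_le[OF \<psi> g] abs_pair_atoms_le[OF \<open>Mfin_Z l N c p\<close> \<psi>]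
  show "x \<le> integral {0..l} (\<lambda>s. \<bar>g s\<bar>) + 2 * pi * (\<Sum>j<N. \<bar>of_int (c j)\<bar>)"
    unfolding x by linarith
qed

lemma flat_norm_atoms_tendsto_zero:
  fixes D G :: "nat \<Rightarrow> real \<Rightarrow> real"
  assumes close: "\<And>k \<psi>. flat_test l \<psi> \<Longrightarrow> \<bar>pair_density l (D k) \<psi> - pair_density l (G k) \<psi>\<bar> \<le> a k"
    and G: "\<And>k. G k absolutely_integrable_on {0..l}" and \<omega>: "Mfin_Z l N c p"
    and a: "a \<longlonglongrightarrow> 0"
    and limit: "(\<lambda>k. flat_norm l (\<lambda>\<psi>. pair_density l (G k) \<psi> - pair_atoms N c p \<psi>)) \<longlonglongrightarrow> 0"
  shows "(\<lambda>k. flat_norm l (\<lambda>\<psi>. pair_density l (D k) \<psi> - pair_atoms N c p \<psi>)) \<longlonglongrightarrow> 0"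
proof -
  define \<mu> where "\<mu> k = (\<lambda>\<psi>. pair_density l (D k) \<psi> - pair_atoms N c p \<psi>)" for k
  define \<nu> where "\<nu> k = (\<lambda>\<psi>. pair_density l (G k) \<psi> - pair_atoms N c p \<psi>)" for k
  have "\<forall>k. \<forall>\<psi>. flat_test l \<psi> \<longrightarrow> \<bar>\<mu> k \<psi> - \<nu> k \<psi>\<bar> \<le> a k"
    using close by (simp add: \<mu>_def \<nu>_def)
  moreover have "\<forall>k. bdd_above {\<nu> k \<psi> | \<psi>. flat_test l \<psi>}"
    using bdd_above_pair_density_minus_atoms[OF G \<omega>] by (simp add: \<nu>_def)
  moreover have "\<forall>k. \<mu> k (\<lambda>_. 0) = 0" by (simp add: \<mu>_def)
  moreover have "(\<lambda>k. flat_norm l (\<nu> k)) \<longlonglongrightarrow> 0" unfolding \<nu>_def by (rule limit)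
  ultimately have "(\<lambda>k. flat_norm l (\<mu> k)) \<longlonglongrightarrow> 0"
    using flat_norm_tendsto_zero_perturb[OF always_eventually always_eventually always_eventually a] by blast
  then show ?thesis unfolding \<mu>_def .
qed

lemma pair_density_diff:
  assumes "continuous_on {0..l} \<psi>" "f absolutely_integrable_on {0..l}" "g absolutely_integrable_on {0..l}"
  shows "pair_density l (\<lambda>s. f s - g s) \<psi> = pair_density l f \<psi> - pair_density l g \<psi>"
  using continuous_on_mult_absolutely_integrable[OF assms(1) assms(2)]
    continuous_on_mult_absolutely_integrable[OF assms(1) assms(3)]
  by (simp add: pair_density_def right_diff_distrib integral_diff absolutely_integrable_on_def)

section \<open>The defect estimate\<close>

lemma has_weak_deriv_Phi_compose:
  assumes "has_weak_deriv l \<phi> h"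
  shows "has_weak_deriv l (\<lambda>x. Phi (\<phi> x)) (\<lambda>x. 2 * sqrt 2 * \<bar>sin (\<phi> x / 2)\<bar> * h x)"
  by (rule has_weak_deriv_compose[OF assms Phi_has_real_derivative Phi_derivative_lipschitz])

lemma has_weak_deriv_Phi_defect_compose:
  assumes "has_weak_deriv l \<phi> h"
  shows "has_weak_deriv l (\<lambda>x. Phi_defect (\<phi> x))
    (\<lambda>s. 2 * pi / (8 * sqrt 2) * wderiv l (\<lambda>t. Phi (\<phi> t)) s - wderiv l \<phi> s)"
  using has_weak_deriv_diff[OF has_weak_deriv_cmult[OF has_weak_deriv_wderiv[OF has_weak_deriv_Phi_compose[OF assms]]]
      has_weak_deriv_wderiv[OF assms]]
  unfolding Phi_defect_def .

lemma abs_pair_density_Phi_defect_le: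
  assumes \<phi>: "has_weak_deriv l \<phi> h" and per: "cis (\<phi> 0) = cis (\<phi> l)" and \<psi>: "flat_test l \<psi>"
    and "l \<ge> 0"
  shows "\<bar>pair_density l (\<lambda>s. 2 * pi / (8 * sqrt 2) * wderiv l (\<lambda>t. Phi (\<phi> t)) s - wderiv l \<phi> s) \<psi>\<bar>
    \<le> integral {0..l} (\<lambda>x. \<bar>Phi_defect (\<phi> x)\<bar>)"
proof -
  have "\<psi> l * Phi_defect (\<phi> l) = \<psi> 0 * Phi_defect (\<phi> 0)"
    using \<psi> Phi_defect_cis_cong[OF per] by (simp add: flat_test_def)
  from periodic_integration_by_parts_bound[OF has_weak_deriv_Phi_defect_compose[OF \<phi>]
      flat_test_lipschitz[OF \<psi>] this \<open>l \<ge> 0\<close>]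
  show ?thesis by (simp add: pair_density_def)
qed

lemma pair_density_Phi_split:
  assumes T: "has_weak_deriv l T T'" and \<theta>: "has_weak_deriv l \<theta> \<theta>'" and \<psi>: "flat_test l \<psi>"
    and "l \<ge> 0"
  shows "pair_density l (\<lambda>s. 2 * pi / (8 * sqrt 2) * wderiv l (\<lambda>t. Phi (T t - \<theta> t)) s) \<psi>
    = pair_density l (\<lambda>s. 2 * pi / (8 * sqrt 2) * wderiv l (\<lambda>t. Phi (T t - \<theta> t)) s
        - wderiv l (\<lambda>t. T t - \<theta> t) s) \<psi>
      + pair_density l (\<lambda>s. wderiv l T s - wderiv l \<theta> s) \<psi>"
proof -
  have \<phi>: "has_weak_deriv l (\<lambda>t. T t - \<theta> t) (\<lambda>s. wderiv l T s - wderiv l \<theta> s)"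
    using has_weak_deriv_diff[OF has_weak_deriv_wderiv[OF T] has_weak_deriv_wderiv[OF \<theta>]] .
  have "pair_density l (wderiv l (\<lambda>t. T t - \<theta> t)) \<psi> = pair_density l (\<lambda>s. wderiv l T s - wderiv l \<theta> s) \<psi>"
    by (rule pair_density_weak_deriv_unique[OF has_weak_deriv_wderiv[OF \<phi>] \<phi> flat_test_lipschitz[OF \<psi>] \<open>l \<ge> 0\<close>])
  moreover have "pair_density l (\<lambda>s. 2 * pi / (8 * sqrt 2) * wderiv l (\<lambda>t. Phi (T t - \<theta> t)) s
        - wderiv l (\<lambda>t. T t - \<theta> t) s) \<psi>
      = pair_density l (\<lambda>s. 2 * pi / (8 * sqrt 2) * wderiv l (\<lambda>t. Phi (T t - \<theta> t)) s) \<psi>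
        - pair_density l (wderiv l (\<lambda>t. T t - \<theta> t)) \<psi>"
    using lipschitz_on_continuous_on[OF flat_test_lipschitz[OF \<psi>]]
      has_weak_derivD(1)[OF has_weak_deriv_cmult[OF has_weak_deriv_wderiv[OF has_weak_deriv_Phi_compose[OF \<phi>]]]]
      has_weak_derivD(1)[OF has_weak_deriv_wderiv[OF \<phi>]]
    by (rule pair_density_diff)
  ultimately show ?thesis by simp
qed

lemma abs_pair_density_Phi_defect_le_tangent:
  fixes T \<theta> T' \<theta>' :: "real \<Rightarrow> real"
  assumes T: "has_weak_deriv l T T'" and \<theta>: "has_weak_deriv l \<theta> \<theta>'"
    and per: "cis (T 0) = cis (T l)" "cis (\<theta> 0) = cis (\<theta> l)"
    and tangent: "integral {0..l} (\<lambda>s. (cmod (cis (T s) - cis (\<theta> s)))\<^sup>2) \<le> C * sqrt \<epsilon>"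
    and "\<epsilon> > 0" "l \<ge> 0" and \<psi>: "flat_test l \<psi>"
  shows "\<bar>pair_density l (\<lambda>s. 2 * pi / (8 * sqrt 2) * wderiv l (\<lambda>t. Phi (T t - \<theta> t)) s
            - wderiv l (\<lambda>t. T t - \<theta> t) s) \<psi>\<bar> \<le> 9 * (C + l) / 2 * sqrt (sqrt \<epsilon>)"
proof -
  define \<delta> where "\<delta> = sqrt (sqrt \<epsilon>)"
  have "\<delta> > 0" "\<delta>\<^sup>2 = sqrt \<epsilon>" using \<open>\<epsilon> > 0\<close> by (simp_all add: \<delta>_def)
  have "cis (T l - \<theta> l) = cis (T 0 - \<theta> 0)" using per by (simp flip: cis_divide)
  from abs_pair_density_Phi_defect_le[OF has_weak_deriv_diff[OF T \<theta>] this[symmetric] \<psi> \<open>l \<ge> 0\<close>]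
  have "\<bar>pair_density l (\<lambda>s. 2 * pi / (8 * sqrt 2) * wderiv l (\<lambda>t. Phi (T t - \<theta> t)) s
            - wderiv l (\<lambda>t. T t - \<theta> t) s) \<psi>\<bar> \<le> integral {0..l} (\<lambda>x. \<bar>Phi_defect (T x - \<theta> x)\<bar>)" .
  also have "\<dots> \<le> 9 / (2 * \<delta>) * integral {0..l} (\<lambda>s. (cmod (cis (T s) - cis (\<theta> s)))\<^sup>2) + 9 * \<delta> / 2 * l"
    using has_weak_deriv_continuous_on[OF T] has_weak_deriv_continuous_on[OF \<theta>] \<open>\<delta> > 0\<close> \<open>l \<ge> 0\<close>
    by (rule integral_abs_Phi_defect_le)
  also have "\<dots> \<le> 9 / (2 * \<delta>) * (C * \<delta>\<^sup>2) + 9 * \<delta> / 2 * l"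
    using tangent \<open>\<delta> > 0\<close> \<open>\<delta>\<^sup>2 = sqrt \<epsilon>\<close> by (intro add_right_mono mult_left_mono) auto
  also have "\<dots> = 9 * (C + l) / 2 * \<delta>" using \<open>\<delta> > 0\<close> by (simp add: field_simps power2_eq_square)
  finally show ?thesis unfolding \<delta>_def .
qed

theorem lemma6p4:
  fixes l C :: real
    and \<gamma> \<gamma>' \<gamma>'' :: "real \<Rightarrow> complex" and \<theta> :: "real \<Rightarrow> real"
    and \<gamma>e :: "real \<Rightarrow> real \<Rightarrow> complex" and \<theta>e :: "real \<Rightarrow> real \<Rightarrow> real"
  assumes l_pos: "l > 0"
    and C_pos: "C > 0"
    and gamma_C2: "continuous_on {0..l} \<gamma>'" "continuous_on {0..l} \<gamma>''"
      "\<forall>s\<in>{0..l}. (\<gamma> has_vector_derivative \<gamma>' s) (at s within {0..l})"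
      "\<forall>s\<in>{0..l}. (\<gamma>' has_vector_derivative \<gamma>'' s) (at s within {0..l})"
    and gamma_closed: "\<gamma> 0 = \<gamma> l" "\<gamma>' 0 = \<gamma>' l" "\<gamma>'' 0 = \<gamma>'' l"
    and theta_lift: "continuous_on {0..l} \<theta>" "\<forall>s\<in>{0..l}. \<gamma>' s = cis (\<theta> s)"
    and thetae_H1: "\<forall>\<epsilon>\<in>{0<..1}. H1 l (\<theta>e \<epsilon>)"
    and gammae_lift: "\<forall>\<epsilon>\<in>{0<..1}. \<forall>s\<in>{0..l}.
          (\<gamma>e \<epsilon> has_vector_derivative cis (\<theta>e \<epsilon> s)) (at s within {0..l})"
    and gammae_closed: "\<forall>\<epsilon>\<in>{0<..1}. \<gamma>e \<epsilon> 0 = \<gamma>e \<epsilon> l \<and> cis (\<theta>e \<epsilon> 0) = cis (\<theta>e \<epsilon> l)"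
    and bound_curv: "\<forall>\<epsilon>\<in>{0<..1}.
          sqrt \<epsilon> * integral {0..l} (\<lambda>s. (wderiv l (\<theta>e \<epsilon>) s)^2) \<le> C"
    and bound_tangent: "\<forall>\<epsilon>\<in>{0<..1}.
          integral {0..l} (\<lambda>s. (cmod (cis (\<theta>e \<epsilon> s) - \<gamma>' s))^2) \<le> C * sqrt \<epsilon>"
  shows "((\<lambda>\<epsilon>. flat_norm l (pair_density l (\<lambda>s.
            2 * pi / (8 * sqrt 2) * wderiv l (\<lambda>t. Phi (\<theta>e \<epsilon> t - \<theta> t)) s
            - wderiv l (\<lambda>t. \<theta>e \<epsilon> t - \<theta> t) s))) \<longlongrightarrow> 0) (at_right 0)
     \<and> (\<forall>\<epsilon>k :: nat \<Rightarrow> real. \<forall>N c p.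
          (\<forall>k. \<epsilon>k k \<in> {0<..1}) \<and> \<epsilon>k \<longlonglongrightarrow> 0 \<and> Mfin_Z l N c p \<and>
          (\<lambda>k. flat_norm l (\<lambda>\<psi>. pair_density l (\<lambda>s. wderiv l (\<theta>e (\<epsilon>k k)) s - wderiv l \<theta> s) \<psi>
                                   - pair_atoms N c p \<psi>)) \<longlonglongrightarrow> 0
          \<longrightarrow> (\<lambda>k. flat_norm l (\<lambda>\<psi>. pair_density l (\<lambda>s. 2 * pi / (8 * sqrt 2) *
                     wderiv l (\<lambda>t. Phi (\<theta>e (\<epsilon>k k) t - \<theta> t)) s) \<psi>
                                   - pair_atoms N c p \<psi>)) \<longlonglongrightarrow> 0)"
proof -
  have "l \<ge> 0" using l_pos by simp
  have \<theta>: "has_weak_deriv l \<theta> (\<lambda>s. Im (\<gamma>'' s * cnj (\<gamma>' s)))"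
    using theta_lift gamma_C2(1,2,4)
    by (intro has_weak_deriv_of_real_derivative lifting_has_real_derivative continuous_intros) auto
  have \<theta>_per: "cis (\<theta> 0) = cis (\<theta> l)" using gamma_closed(2) theta_lift(2) \<open>l \<ge> 0\<close> by auto
  have \<theta>e: "has_weak_deriv l (\<theta>e \<epsilon>) (wderiv l (\<theta>e \<epsilon>))" if "\<epsilon> \<in> {0<..1}" for \<epsilon>
    using thetae_H1 that unfolding H1_def by (blast intro: has_weak_deriv_wderiv)
  have tangent: "integral {0..l} (\<lambda>s. (cmod (cis (\<theta>e \<epsilon> s) - cis (\<theta> s)))\<^sup>2) \<le> C * sqrt \<epsilon>"
    if "\<epsilon> \<in> {0<..1}" for \<epsilon>
  proof -
    have "integral {0..l} (\<lambda>s. (cmod (cis (\<theta>e \<epsilon> s) - cis (\<theta> s)))\<^sup>2)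
        = integral {0..l} (\<lambda>s. (cmod (cis (\<theta>e \<epsilon> s) - \<gamma>' s))\<^sup>2)"
      using theta_lift(2) by (intro integral_cong) simp
    also have "\<dots> \<le> C * sqrt \<epsilon>" using bound_tangent that by blast
    finally show ?thesis .
  qed
  have \<theta>e_per: "cis (\<theta>e \<epsilon> 0) = cis (\<theta>e \<epsilon> l)" if "\<epsilon> \<in> {0<..1}" for \<epsilon>
    using gammae_closed that by blast
  define K where "K = 9 * (C + l) / 2"
  have defect: "\<forall>\<psi>. flat_test l \<psi> \<longrightarrow> \<bar>pair_density l (\<lambda>s. 2 * pi / (8 * sqrt 2) *
      wderiv l (\<lambda>t. Phi (\<theta>e \<epsilon> t - \<theta> t)) s - wderiv l (\<lambda>t. \<theta>e \<epsilon> t - \<theta> t) s) \<psi>\<bar> \<le> K * sqrt (sqrt \<epsilon>)"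
    if "\<epsilon> \<in> {0<..1}" for \<epsilon>
    using abs_pair_density_Phi_defect_le_tangent[OF \<theta>e[OF that] \<theta> \<theta>e_per[OF that] \<theta>_per tangent[OF that]]
      that \<open>l \<ge> 0\<close> by (simp add: K_def)
  show ?thesis
  proof (intro conjI allI impI)
    have ev: "\<forall>\<^sub>F \<epsilon> in at_right 0. \<epsilon> \<in> {0<..1::real}"
      unfolding eventually_at_right_field by (intro exI[of _ 1]) auto
    have "((\<lambda>\<epsilon>. K * sqrt (sqrt \<epsilon>)) \<longlongrightarrow> K * sqrt (sqrt 0)) (at_right 0)"
      by (intro tendsto_intros)
    then have lim: "((\<lambda>\<epsilon>. K * sqrt (sqrt \<epsilon>)) \<longlongrightarrow> 0) (at_right 0)" by simp
    show "((\<lambda>\<epsilon>. flat_norm l (pair_density l (\<lambda>s.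
            2 * pi / (8 * sqrt 2) * wderiv l (\<lambda>t. Phi (\<theta>e \<epsilon> t - \<theta> t)) s
            - wderiv l (\<lambda>t. \<theta>e \<epsilon> t - \<theta> t) s))) \<longlongrightarrow> 0) (at_right 0)"
      using flat_norm_tendsto_zero[OF eventually_mono[OF ev defect] _ lim] by simp
  next
    fix \<epsilon>k :: "nat \<Rightarrow> real" and N c p
    assume "(\<forall>k. \<epsilon>k k \<in> {0<..1}) \<and> \<epsilon>k \<longlonglongrightarrow> 0 \<and> Mfin_Z l N c p \<and>
          (\<lambda>k. flat_norm l (\<lambda>\<psi>. pair_density l (\<lambda>s. wderiv l (\<theta>e (\<epsilon>k k)) s - wderiv l \<theta> s) \<psi>
                                   - pair_atoms N c p \<psi>)) \<longlonglongrightarrow> 0"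
    then have \<epsilon>k: "\<And>k. \<epsilon>k k \<in> {0<..1}" and "\<epsilon>k \<longlonglongrightarrow> 0" and "Mfin_Z l N c p"
      and limit: "(\<lambda>k. flat_norm l (\<lambda>\<psi>. pair_density l (\<lambda>s. wderiv l (\<theta>e (\<epsilon>k k)) s - wderiv l \<theta> s) \<psi>
                                   - pair_atoms N c p \<psi>)) \<longlonglongrightarrow> 0" by blast+
    have close: "\<bar>pair_density l (\<lambda>s. 2 * pi / (8 * sqrt 2) * wderiv l (\<lambda>t. Phi (\<theta>e (\<epsilon>k k) t - \<theta> t)) s) \<psi>
        - pair_density l (\<lambda>s. wderiv l (\<theta>e (\<epsilon>k k)) s - wderiv l \<theta> s) \<psi>\<bar> \<le> K * sqrt (sqrt (\<epsilon>k k))"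
      if "flat_test l \<psi>" for k \<psi>
      using defect[OF \<epsilon>k[of k]] that
      unfolding pair_density_Phi_split[OF \<theta>e[OF \<epsilon>k[of k]] \<theta> that \<open>l \<ge> 0\<close>] by simp
    have \<phi>: "has_weak_deriv l (\<lambda>t. \<theta>e (\<epsilon>k k) t - \<theta> t) (\<lambda>s. wderiv l (\<theta>e (\<epsilon>k k)) s - wderiv l \<theta> s)" for k
      using has_weak_deriv_diff[OF \<theta>e[OF \<epsilon>k] has_weak_deriv_wderiv[OF \<theta>]] .
    have "((\<lambda>k. K * sqrt (sqrt (\<epsilon>k k))) \<longlongrightarrow> K * sqrt (sqrt 0)) sequentially"
      by (intro tendsto_intros \<open>\<epsilon>k \<longlonglongrightarrow> 0\<close>)
    then have "(\<lambda>k. K * sqrt (sqrt (\<epsilon>k k))) \<longlonglongrightarrow> 0" by simp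
    from flat_norm_atoms_tendsto_zero[OF close has_weak_derivD(1)[OF \<phi>] \<open>Mfin_Z l N c p\<close> this limit]
    show "(\<lambda>k. flat_norm l (\<lambda>\<psi>. pair_density l (\<lambda>s. 2 * pi / (8 * sqrt 2) *
                     wderiv l (\<lambda>t. Phi (\<theta>e (\<epsilon>k k) t - \<theta> t)) s) \<psi>
                                   - pair_atoms N c p \<psi>)) \<longlonglongrightarrow> 0" .
  qed
qed

end
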